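(* Let $\mathcal H=\{h_1,\dots,h_k\}$ be a set of $k\ge2$ distinct integers with $0\notin\mathcal H$ such that $\mathcal H^0=\mathcal H\cup\{0\}$ is admissible, and let $1\le\ell\le k$. If $r<R$ and $(r,A_0)=1$, then \[ y^\dagger_{r,\ell}=\mu^2(r)\frac{\mathfrak S(\mathcal H^0)}{\ell!}(\log R/r)^\ell+O\big(\mu^2(r)\beta(\mathcal H^0)\mathfrak S(\mathcal H^0)(\log 2R/r)^{\ell-1}\big), \] with implied constant depending only on $k$.
   Context: For a finite set $\mathcal K$ of $m$ distinct integers: - $\nu_p(\mathcal K)$ is the number of residue classes mod $p$ occupied by $\mathcal K$, and for squarefree $d$, $\nu_d(\mathcal K)=\prod_{p\mid d}\nu_p(\mathcal K)$; - $\mathfrak S(\mathcal K)=\prod_p(1-\nu_p(\mathcal K)/p)(1-1/p)^{-m}$ and $\beta(\mathcal K)=\sum_p(m-\nu_p(\mathcal K))\log p/p$; - $\mathcal K$ is admissible if $\nu_p(\mathcal K)<p$ for all $p$. Write $\nu_p=\nu_p(\mathcal H)$. For squarefree $d$, let $f(d)=\prod_{p\mid d}p/\nu_p$ and $f_1(d)=\prod_{p\mid d}(p-\nu_p)/\nu_p$. For $R>1$, \[ \lambda_{d,\ell}=\mu(d)\frac{f(d)}{f_1(d)}\frac{\mathfrak S(\mathcal H)}{\ell!}\sum_{r<R/d,(r,d)=1}\frac{\mu^2(r)}{f_1(r)}(\log\tfrac R{rd})^\ell\quad\text{for } d<R, \] and $\lambda_{d,\ell}=0$ for $d\ge R$.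 Let $\nu_p^\dagger=\nu_p(\mathcal H^0)-1$, and let $A_0$ be the product of the primes with $\nu_p^\dagger=0$. For squarefree $r$ coprime to $A_0$, let $f^\dagger(r)=\prod_{p\mid r}(p-1)/\nu_p^\dagger$ and $f_1^\dagger(r)=\prod_{p\mid r}(p-1-\nu_p^\dagger)/\nu_p^\dagger$. Define \[ y^\dagger_{r,\ell}=\mu(r)f_1^\dagger(r)\sum_{(d,A_0)=1}\frac{\lambda_{dr,\ell}}{f^\dagger(dr)} \] if $(r,A_0)=1$ and $r<R$, and $y^\dagger_{r,\ell}=0$ otherwise. *)

theory Defs
  imports "HOL-Analysis.Analysis" "HOL-Computational_Algebra.Squarefree"
begin

definition moebius :: "nat \<Rightarrow> int" where
  "moebius d = (if squarefree d then (-1) ^ card (prime_factors d) else 0)"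

definition nu :: "nat \<Rightarrow> int set \<Rightarrow> nat" where
  "nu p K = card ((\<lambda>h. h mod int p) ` K)"

definition admissible :: "int set \<Rightarrow> bool" where
  "admissible K \<longleftrightarrow> (\<forall>p. prime p \<longrightarrow> nu p K < p)"

definition sing :: "int set \<Rightarrow> real" where
  "sing K = (\<Prod>p. if prime p
      then (1 - real (nu p K) / real p) / (1 - 1 / real p) ^ card K else 1)"

definition beta :: "int set \<Rightarrow> real" where
  "beta K = (\<Sum>p. if prime p
      then (real (card K) - real (nu p K)) * ln (real p) / real p else 0)"

definition fH :: "int set \<Rightarrow> nat \<Rightarrow> real" where
  "fH H d = (\<Prod>p\<in>prime_factors d. real p / real (nu p H))"

definition f1H :: "int set \<Rightarrow> nat \<Rightarrow> real" where
  "f1H H d = (\<Prod>p\<in>prime_factors d. (real p - real (nu p H)) / real (nu p H))"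

definition lam :: "int set \<Rightarrow> real \<Rightarrow> nat \<Rightarrow> nat \<Rightarrow> real" where
  "lam H R l d = (if real d < R then
      real_of_int (moebius d) * fH H d / f1H H d * sing H / fact l *
      (\<Sum>r\<in>{r::nat. 0 < r \<and> real r < R / real d \<and> coprime r d}.
          real_of_int ((moebius r)\<^sup>2) / f1H H r * (ln (R / (real r * real d))) ^ l)
    else 0)"

definition nudag :: "int set \<Rightarrow> nat \<Rightarrow> nat" where
  "nudag H p = nu p (insert 0 H) - 1"

definition A0 :: "int set \<Rightarrow> nat" where
  "A0 H = \<Prod>{p. prime p \<and> nudag H p = 0}"

definition fdag :: "int set \<Rightarrow> nat \<Rightarrow> real" where
  "fdag H r = (\<Prod>p\<in>prime_factors r. (real p - 1) / real (nudag H p))"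

definition f1dag :: "int set \<Rightarrow> nat \<Rightarrow> real" where
  "f1dag H r = (\<Prod>p\<in>prime_factors r. (real p - 1 - real (nudag H p)) / real (nudag H p))"

text \<open>y-dagger_{r,l}; the sum over d is over positive d coprime to A0; terms with
  d r \<ge> R vanish since lambda_{dr,l} = 0, so we sum only over d r < R.\<close>
definition ydag :: "int set \<Rightarrow> real \<Rightarrow> nat \<Rightarrow> nat \<Rightarrow> real" where
  "ydag H R l r = (if coprime r (A0 H) \<and> real r < R then
      real_of_int (moebius r) * f1dag H r *
      (\<Sum>d\<in>{d::nat. 0 < d \<and> coprime d (A0 H) \<and> real (d * r) < R}.
          lam H R l (d * r) / fdag H (d * r))
    else 0)"

end

theory Submission
  imports Defs
begin

text \<open>
  Let \<open>A\<close> be the primes up to some \<open>Q \<ge> R\<close> that do not divide \<open>r\<close>. Writing squarefree numbers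
  as products of sets of primes and expanding \<open>lam\<close>, \<open>fdag\<close> and \<open>f1dag\<close> prime by prime turns
  \<open>ydag H R l r\<close> into
    \<open>sing H / l! * (\<Prod>p | r. 1 + g p) * (\<Sum>M \<subseteq> A. (\<Prod>p\<in>M. g p) * (ln (R/r) - \<Sum>p\<in>M. ln p)\<^sub>+ ^ l)\<close>,
  where \<open>1 + g p\<close> is the ratio of the Euler factors of \<open>sing H0\<close> and \<open>sing H\<close> at \<open>p\<close>.
  Replacing each truncated power by \<open>ln (R/r) ^ l\<close> gives the main term
  \<open>sing H * (\<Prod>p\<le>Q. 1 + g p) * ln (R/r) ^ l / l!\<close> with an error of at most
  \<open>l * ln (R/r) ^ (l-1) * (\<Sum>p\<in>A. \<bar>g p\<bar> * ln p) * (\<Prod>p\<in>A. 1 + \<bar>g p\<bar>)\<close>.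
  Since \<open>g p = O(k/p)\<close>, and \<open>g p\<close> is negative only when \<open>0\<close> opens a new residue class mod \<open>p\<close>,
  in which case \<open>g p = O(k\<^sup>2/p\<^sup>2)\<close>, the sum is \<open>O(beta H0)\<close> and the product is \<open>O(\<Prod>p\<in>A. 1 + g p)\<close>.
  Finally \<open>sing H * (\<Prod>p\<le>Q. 1 + g p) \<longrightarrow> sing H0\<close> as \<open>Q \<rightarrow> \<infinity>\<close>.
\<close>

declare of_nat_prod [simp del]

section \<open>Squarefree numbers as finite sets of primes\<close>

lemma squarefree_imp_pos: "squarefree (n::nat) \<Longrightarrow> 0 < n"
  by (rule ccontr) simp

lemma prime_factors_prod_primes:
  assumes "finite S" "\<forall>p\<in>S. prime (p::nat)"
  shows "prime_factors (\<Prod>S) = S"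
  using assms by (subst prime_factors_prod) (auto simp: prime_prime_factors)

lemma squarefree_prod_primes:
  assumes "finite S" "\<forall>p\<in>S. prime (p::nat)"
  shows "squarefree (\<Prod>S)"
  using assms by (intro squarefree_prod_coprime) (auto simp: primes_coprime squarefree_prime)

lemma prod_prime_factors_squarefree:
  assumes "squarefree (n::nat)"
  shows "\<Prod>(prime_factors n) = n"
proof -
  have "n \<noteq> 0" using squarefree_imp_pos[OF assms] by simp
  have "\<forall>p\<in>prime_factors n. multiplicity p n = 1"
    using assms squarefree_factorial_semiring'[OF \<open>n \<noteq> 0\<close>] by auto
  then have "\<Prod>(prime_factors n) = (\<Prod>p\<in>prime_factors n. p ^ multiplicity p n)"
    by (intro prod.cong) auto
  also have "\<dots> = n" using prod_prime_factors[OF \<open>n \<noteq> 0\<close>] by simp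
  finally show ?thesis .
qed

lemma moebius_prod_primes:
  assumes "finite S" "\<forall>p\<in>S. prime (p::nat)"
  shows "moebius (\<Prod>S) = (-1) ^ card S"
  using assms by (simp add: moebius_def squarefree_prod_primes prime_factors_prod_primes)

lemma moebius_squared: "(moebius n)\<^sup>2 = (if squarefree n then 1 else 0)"
  by (simp add: moebius_def power_even_eq[symmetric] power_mult_distrib)

lemma prime_in_set_if_dvd_prod:
  assumes "prime (p::nat)" "p dvd \<Prod>S" "\<forall>q\<in>S. prime q"
  shows "p \<in> S"
proof (cases "finite S")
  case True
  then obtain q where "q \<in> S" "p dvd q"
    using prime_dvd_prod_iff[OF True assms(1)] assms(2) by auto
  with assms(1,3) show ?thesis by (metis primes_dvd_imp_eq)
next
  case False
  with assms(1,2) show ?thesis using not_prime_unit by auto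
qed

lemma prod_primes_pos: "\<forall>p\<in>S. prime (p::nat) \<Longrightarrow> 0 < \<Prod>S"
  by (rule prod_pos) (auto intro: prime_gt_0_nat)

lemma ln_prime_nonneg: "prime p \<Longrightarrow> 0 \<le> ln (real p)"
  using prime_ge_1_nat[of p] by simp

lemma ln_prod_primes:
  assumes "finite S" "\<forall>p\<in>S. prime (p::nat)"
  shows "ln (real (\<Prod>S)) = (\<Sum>p\<in>S. ln (real p))"
  using assms by (simp add: of_nat_prod ln_prod prime_gt_0_nat)

lemma coprime_prod_primes:
  assumes "T \<inter> E = {}" "\<forall>p\<in>T \<union> E. prime (p::nat)"
  shows "coprime (\<Prod>T) (\<Prod>E)"
proof (intro prod_coprime_left prod_coprime_right)
  fix p q assume "p \<in> T" "q \<in> E"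
  with assms show "coprime p q" by (intro primes_coprime) auto
qed

lemma prime_factors_disjoint_if_squarefree_mult:
  assumes "squarefree (a * b :: nat)"
  shows "prime_factors a \<inter> prime_factors b = {}"
proof (rule ccontr)
  assume "prime_factors a \<inter> prime_factors b \<noteq> {}"
  then obtain p where "prime p" "p dvd a" "p dvd b" by auto
  then have "p\<^sup>2 dvd a * b" by (simp add: power2_eq_square mult_dvd_mono)
  then show False using assms \<open>prime p\<close> squarefreeD not_prime_unit by blast
qed

definition primes_le :: "nat \<Rightarrow> nat set" where
  "primes_le Q = {p. prime p \<and> p \<le> Q}"

lemma finite_primes_le: "finite (primes_le Q)"
  unfolding primes_le_def by (rule finite_subset[of _ "{..Q}"]) auto

lemma subset_primes_leD:
  assumes "S \<subseteq> primes_le Q"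
  shows "finite S" "\<forall>p\<in>S. prime p"
  using assms finite_subset[OF assms finite_primes_le] by (auto simp: primes_le_def)

lemma prime_factors_subset_primes_le:
  assumes "0 < n" "n \<le> Q"
  shows "prime_factors n \<subseteq> primes_le Q"
  using assms by (auto simp: primes_le_def prime_factors_dvd dest!: dvd_imp_le)

lemma sum_squarefree_eq_sum_Pow:
  fixes F :: "nat \<Rightarrow> 'b::comm_monoid_add"
  assumes P: "finite P" "\<forall>p\<in>P. prime p" and "finite N"
    and N_support: "\<And>n. n \<in> N \<Longrightarrow> F n \<noteq> 0 \<Longrightarrow> squarefree n \<and> prime_factors n \<subseteq> P"
    and Pow_support: "\<And>D. D \<subseteq> P \<Longrightarrow> F (\<Prod>D) \<noteq> 0 \<Longrightarrow> \<Prod>D \<in> N"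
  shows "(\<Sum>n\<in>N. F n) = (\<Sum>D\<in>Pow P. F (\<Prod>D))"
proof -
  let ?I = "Prod ` Pow P"
  have "inj_on Prod (Pow P)"
  proof (rule inj_on_inverseI[of _ prime_factors])
    fix D assume "D \<in> Pow P"
    with P show "prime_factors (\<Prod>D) = D"
      by (intro prime_factors_prod_primes) (auto intro: finite_subset)
  qed
  then have "(\<Sum>D\<in>Pow P. F (\<Prod>D)) = (\<Sum>n\<in>?I. F n)"
    by (simp add: sum.reindex)
  also have "\<dots> = (\<Sum>n\<in>N \<inter> ?I. F n)"
    using P Pow_support by (intro sum.mono_neutral_right) auto
  also have "\<dots> = (\<Sum>n\<in>N. F n)"
  proof (intro sum.mono_neutral_left \<open>finite N\<close> ballI)
    fix n assume "n \<in> N - N \<inter> ?I"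
    then show "F n = 0"
      using N_support prod_prime_factors_squarefree by (metis DiffE IntI Pow_iff image_eqI)
  qed auto
  finally show ?thesis ..
qed

section \<open>Sums of truncated powers over subsets\<close>

lemma power_diff_le_mult:
  fixes a b :: real
  assumes "0 \<le> b" "b \<le> a"
  shows "a ^ l - b ^ l \<le> real l * a ^ (l - 1) * (a - b)"
proof -
  have "a ^ l - b ^ l = (a - b) * (\<Sum>i<l. b ^ (l - Suc i) * a ^ i)"
    by (rule power_diff_sumr2)
  also have "\<dots> \<le> (a - b) * (\<Sum>i<l. a ^ (l - 1))"
  proof (intro mult_left_mono sum_mono)
    fix i assume "i \<in> {..<l}"
    then have "a ^ (l - Suc i) * a ^ i = a ^ (l - 1)"
      by (simp add: power_add[symmetric])
    moreover have "b ^ (l - Suc i) \<le> a ^ (l - Suc i)"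
      using assms by (intro power_mono) auto
    ultimately show "b ^ (l - Suc i) * a ^ i \<le> a ^ (l - 1)"
      using assms by (metis mult_right_mono order.trans zero_le_power)
  qed (use assms in auto)
  finally show ?thesis by (simp add: algebra_simps)
qed

definition trunc_pow :: "real \<Rightarrow> nat \<Rightarrow> real \<Rightarrow> real" where
  "trunc_pow L l s = (if s < L then (L - s) ^ l else 0)"

lemma trunc_pow_shift: "trunc_pow L l (s + c) = trunc_pow (L - c) l s"
  by (simp add: trunc_pow_def algebra_simps)

lemma abs_trunc_pow_diff_le:
  assumes "0 \<le> L" "0 \<le> s" "1 \<le> l"
  shows "\<bar>trunc_pow L l s - L ^ l\<bar> \<le> real l * L ^ (l - 1) * s"
proof (cases "s < L")
  case True
  then have "L ^ l - (L - s) ^ l \<le> real l * L ^ (l - 1) * s"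
    using power_diff_le_mult[of "L - s" L l] assms by simp
  moreover have "(L - s) ^ l \<le> L ^ l" using assms True by (intro power_mono) auto
  ultimately show ?thesis using True by (simp add: trunc_pow_def)
next
  case False
  have "L ^ l = L * L ^ (l - 1)" using assms by (cases l) auto
  also have "\<dots> \<le> s * L ^ (l - 1)"
    using False assms by (intro mult_right_mono) auto
  also have "\<dots> \<le> real l * (s * L ^ (l - 1))"
    using assms by (intro mult_right_mono[of 1 "real l", simplified]) auto
  finally show ?thesis using False assms by (simp add: trunc_pow_def mult_ac)
qed

lemma sum_Pow_prod_eq_prod_one_plus:
  fixes x :: "'a \<Rightarrow> 'b::comm_semiring_1"
  shows "finite A \<Longrightarrow> (\<Sum>M\<in>Pow A. \<Prod>p\<in>M. x p) = (\<Prod>p\<in>A. 1 + x p)"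
  using prod_add[of A x "\<lambda>_. 1"] by (simp add: add.commute)

lemma sum_Pow_prod_sum_le:
  fixes x y :: "'a \<Rightarrow> real"
  assumes "finite A" "\<forall>p\<in>A. 0 \<le> x p" "\<forall>p\<in>A. 0 \<le> y p"
  shows "(\<Sum>M\<in>Pow A. (\<Prod>p\<in>M. x p) * (\<Sum>p\<in>M. y p))
      \<le> (\<Sum>p\<in>A. x p * y p) * (\<Prod>p\<in>A. 1 + x p)"
  using assms
proof (induction A rule: finite_induct)
  case empty
  then show ?case by simp
next
  case (insert a A)
  let ?U = "\<Sum>M\<in>Pow A. (\<Prod>p\<in>M. x p) * (\<Sum>p\<in>M. y p)"
  let ?P = "\<Prod>p\<in>A. 1 + x p"
  let ?S = "\<Sum>p\<in>A. x p * y p"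
  have inj: "inj_on (insert a) (Pow A)"
    using insert.hyps(2) by (intro inj_onI) (metis PowD insert_ident subset_iff)
  have "(\<Sum>M\<in>insert a ` Pow A. (\<Prod>p\<in>M. x p) * (\<Sum>p\<in>M. y p))
      = (\<Sum>M\<in>Pow A. x a * (\<Prod>p\<in>M. x p) * (y a + (\<Sum>p\<in>M. y p)))"
    using insert.hyps by (subst sum.reindex[OF inj]) (auto intro!: sum.cong
      simp: finite_subset subset_iff prod.insert_if sum.insert_if)
  also have "\<dots> = x a * y a * (\<Sum>M\<in>Pow A. \<Prod>p\<in>M. x p) + x a * ?U"
    by (simp add: sum_distrib_left sum.distrib algebra_simps)
  also have "\<dots> = x a * y a * ?P + x a * ?U"
    by (simp add: sum_Pow_prod_eq_prod_one_plus[OF insert.hyps(1)])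
  finally have "(\<Sum>M\<in>Pow (insert a A). (\<Prod>p\<in>M. x p) * (\<Sum>p\<in>M. y p))
      = (1 + x a) * ?U + x a * y a * ?P"
    using insert.hyps unfolding Pow_insert
    by (subst sum.union_disjoint) (auto simp: algebra_simps)
  also have "\<dots> \<le> (1 + x a) * (?S * ?P) + x a * y a * ?P"
    using insert by (intro add_mono mult_left_mono) auto
  also have "\<dots> \<le> (x a * y a + ?S) * ((1 + x a) * ?P)"
    using insert by (simp add: algebra_simps sum_nonneg prod_nonneg)
  finally show ?case using insert.hyps by simp
qed

lemma sum_Pow_trunc_pow_approx:
  fixes g lam :: "'a \<Rightarrow> real"
  assumes "finite A" "\<forall>p\<in>A. 0 \<le> lam p" "0 \<le> L" "1 \<le> l"
  shows "\<bar>(\<Sum>M\<in>Pow A. (\<Prod>p\<in>M. g p) * trunc_pow L l (\<Sum>p\<in>M. lam p))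
            - (\<Prod>p\<in>A. 1 + g p) * L ^ l\<bar>
         \<le> real l * L ^ (l - 1) * (\<Sum>p\<in>A. \<bar>g p\<bar> * lam p) * (\<Prod>p\<in>A. 1 + \<bar>g p\<bar>)"
proof -
  have lam_sum_nonneg: "0 \<le> (\<Sum>p\<in>M. lam p)" if "M \<in> Pow A" for M
    using that assms(2) by (intro sum_nonneg) auto
  have "(\<Prod>p\<in>A. 1 + g p) * L ^ l = (\<Sum>M\<in>Pow A. (\<Prod>p\<in>M. g p) * L ^ l)"
    by (simp add: sum_Pow_prod_eq_prod_one_plus[OF assms(1), symmetric] sum_distrib_right)
  then have "\<bar>(\<Sum>M\<in>Pow A. (\<Prod>p\<in>M. g p) * trunc_pow L l (\<Sum>p\<in>M. lam p))
            - (\<Prod>p\<in>A. 1 + g p) * L ^ l\<bar>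
      = \<bar>\<Sum>M\<in>Pow A. (\<Prod>p\<in>M. g p) * (trunc_pow L l (\<Sum>p\<in>M. lam p) - L ^ l)\<bar>"
    by (simp add: sum_subtractf right_diff_distrib)
  also have "\<dots> \<le> (\<Sum>M\<in>Pow A. (\<Prod>p\<in>M. \<bar>g p\<bar>) * (real l * L ^ (l - 1) * (\<Sum>p\<in>M. lam p)))"
  proof (intro order.trans[OF sum_abs] sum_mono)
    fix M assume "M \<in> Pow A"
    then have "\<bar>trunc_pow L l (\<Sum>p\<in>M. lam p) - L ^ l\<bar> \<le> real l * L ^ (l - 1) * (\<Sum>p\<in>M. lam p)"
      using assms lam_sum_nonneg by (intro abs_trunc_pow_diff_le) auto
    then show "\<bar>(\<Prod>p\<in>M. g p) * (trunc_pow L l (\<Sum>p\<in>M. lam p) - L ^ l)\<bar>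
        \<le> (\<Prod>p\<in>M. \<bar>g p\<bar>) * (real l * L ^ (l - 1) * (\<Sum>p\<in>M. lam p))"
      by (simp add: abs_mult abs_prod mult_left_mono prod_nonneg)
  qed
  also have "\<dots> = real l * L ^ (l - 1) * (\<Sum>M\<in>Pow A. (\<Prod>p\<in>M. \<bar>g p\<bar>) * (\<Sum>p\<in>M. lam p))"
    by (simp add: sum_distrib_left mult_ac)
  also have "\<dots> \<le> real l * L ^ (l - 1) * ((\<Sum>p\<in>A. \<bar>g p\<bar> * lam p) * (\<Prod>p\<in>A. 1 + \<bar>g p\<bar>))"
    using assms by (intro mult_left_mono sum_Pow_prod_sum_le) auto
  finally show ?thesis by (simp add: mult_ac)
qed

lemma sum_Pow_Pow_Diff_prod:
  fixes h b :: "'a \<Rightarrow> 'b::comm_semiring_1"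
  assumes "finite A"
  shows "(\<Sum>D\<in>Pow A. \<Sum>T\<in>Pow (A - D). (\<Prod>p\<in>D. h p) * (\<Prod>p\<in>T. b p) * F (D \<union> T))
       = (\<Sum>M\<in>Pow A. (\<Prod>p\<in>M. h p + b p) * F M)"
proof -
  have fin: "finite X" if "X \<subseteq> A" for X using assms that finite_subset by auto
  have Diff_disjoint: "T - D = T" if "T \<subseteq> A - D" for D T using that by blast
  have "(\<Sum>D\<in>Pow A. \<Sum>T\<in>Pow (A - D). (\<Prod>p\<in>D. h p) * (\<Prod>p\<in>T. b p) * F (D \<union> T))
      = (\<Sum>(D, T)\<in>Sigma (Pow A) (\<lambda>D. Pow (A - D)). (\<Prod>p\<in>D. h p) * (\<Prod>p\<in>T. b p) * F (D \<union> T))"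
    using assms by (intro sum.Sigma) auto
  also have "\<dots> = (\<Sum>(M, D)\<in>Sigma (Pow A) Pow. (\<Prod>p\<in>D. h p) * (\<Prod>p\<in>M - D. b p) * F M)"
    by (rule sum.reindex_bij_witness[where i = "\<lambda>(M, D). (D, M - D)" and j = "\<lambda>(D, T). (D \<union> T, D)"])
      (auto simp: Un_absorb1 Un_Diff Diff_disjoint)
  also have "\<dots> = (\<Sum>M\<in>Pow A. \<Sum>D\<in>Pow M. (\<Prod>p\<in>D. h p) * (\<Prod>p\<in>M - D. b p) * F M)"
    using assms fin by (intro sum.Sigma[symmetric]) auto
  also have "\<dots> = (\<Sum>M\<in>Pow A. (\<Prod>p\<in>M. h p + b p) * F M)"
    using fin by (intro sum.cong) (auto simp: prod_add sum_distrib_right)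
  finally show ?thesis .
qed

section \<open>The singular series and \<open>beta\<close>\<close>

lemma nu_le_card: "finite K \<Longrightarrow> nu p K \<le> card K"
  unfolding nu_def by (rule card_image_le)

lemma nu_eq_card_if_large:
  assumes "finite K" "prime p" "real p > 2 * (\<Sum>h\<in>K. \<bar>real_of_int h\<bar>)"
  shows "nu p K = card K"
proof -
  have "a = b" if "a \<in> K" "b \<in> K" "a mod int p = b mod int p" for a b
  proof (rule ccontr)
    assume "a \<noteq> b"
    moreover have "int p dvd a - b" using that(3) by (simp add: mod_eq_dvd_iff)
    ultimately have "int p \<le> \<bar>a - b\<bar>" using dvd_imp_le_int[of "a - b" "int p"] by simp
    then have "real p \<le> \<bar>real_of_int a - real_of_int b\<bar>"
      by (metis of_int_abs of_int_diff of_int_le_iff of_int_of_nat_eq)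
    moreover have "\<bar>real_of_int a\<bar> \<le> (\<Sum>h\<in>K. \<bar>real_of_int h\<bar>)" "\<bar>real_of_int b\<bar> \<le> (\<Sum>h\<in>K. \<bar>real_of_int h\<bar>)"
      using that assms(1) by (auto intro!: member_le_sum)
    ultimately show False using assms(3) by linarith
  qed
  then have "inj_on (\<lambda>h. h mod int p) K" by (intro inj_onI)
  then show ?thesis unfolding nu_def by (rule card_image)
qed

lemma one_minus_power_le:
  fixes t :: real
  assumes "0 \<le> t" "t \<le> 1"
  shows "(1 - t) ^ m \<le> 1 - real m * t + (real m)\<^sup>2 * t\<^sup>2"
proof (induction m)
  case (Suc m)
  have "(1 - t) ^ Suc m \<le> (1 - t) * (1 - real m * t + (real m)\<^sup>2 * t\<^sup>2)"
    using Suc assms by (simp add: mult_left_mono)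
  also have "\<dots> = 1 - real (Suc m) * t + (real (Suc m))\<^sup>2 * t\<^sup>2
      - ((real m + 1) * t\<^sup>2 + (real m)\<^sup>2 * t ^ 3)"
    by (simp add: algebra_simps power2_eq_square power3_eq_cube)
  also have "\<dots> \<le> 1 - real (Suc m) * t + (real (Suc m))\<^sup>2 * t\<^sup>2 - 0"
    using assms by (intro diff_left_mono add_nonneg_nonneg) auto
  finally show ?case by simp
qed simp

lemma abs_ratio_one_minus_power_le:
  fixes t :: real
  assumes "0 \<le> t" "t \<le> 1" "2 * real m * t \<le> 1"
  shows "\<bar>(1 - real m * t) / (1 - t) ^ m - 1\<bar> \<le> 2 * (real m)\<^sup>2 * t\<^sup>2"
proof -
  define u where "u = (1 - t) ^ m"
  have lower: "1 - real m * t \<le> u"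
    unfolding u_def using Bernoulli_inequality[of "-t" m] assms by simp
  have upper: "u \<le> 1 - real m * t + (real m)\<^sup>2 * t\<^sup>2"
    unfolding u_def using assms(1,2) by (rule one_minus_power_le)
  have "1 / 2 \<le> u" using lower assms(3) by linarith
  then have "\<bar>(1 - real m * t) / u - 1\<bar> = (u - (1 - real m * t)) / u"
    using lower by (simp add: field_simps abs_div)
  also have "\<dots> \<le> (real m)\<^sup>2 * t\<^sup>2 / (1 / 2)"
    using upper \<open>1 / 2 \<le> u\<close> by (intro frac_le) auto
  finally show ?thesis unfolding u_def by simp
qed

definition euler_factor :: "int set \<Rightarrow> nat \<Rightarrow> real" where
  "euler_factor K p = (if prime p then (1 - real (nu p K) / real p) / (1 - 1 / real p) ^ card K else 1)"

lemma euler_factor_pos: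
  assumes "admissible K"
  shows "0 < euler_factor K p"
proof (cases "prime p")
  case True
  then have "real (nu p K) < real p" "1 < real p"
    using assms prime_gt_1_nat unfolding admissible_def by auto
  then show ?thesis using True by (simp add: euler_factor_def)
qed (simp add: euler_factor_def)

lemma euler_factor_has_prod_sing:
  assumes "finite K" "admissible K"
  shows "euler_factor K has_prod sing K"
proof -
  define m where "m = card K"
  define N where "N = nat \<lceil>max (2 * (\<Sum>h\<in>K. \<bar>real_of_int h\<bar>)) (2 * real m)\<rceil> + 1"
  have "summable (\<lambda>n. 2 * (real m)\<^sup>2 * inverse (real n ^ 2))"
    by (intro summable_mult inverse_power_summable) simp
  then have "summable (\<lambda>n. norm (euler_factor K n - 1))"
  proof (rule summable_comparison_test')
    fix n assume "N \<le> n"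
    then have large: "2 * (\<Sum>h\<in>K. \<bar>real_of_int h\<bar>) < real n" "2 * real m < real n"
      unfolding N_def by linarith+
    show "norm (norm (euler_factor K n - 1)) \<le> 2 * (real m)\<^sup>2 * inverse (real n ^ 2)"
    proof (cases "prime n")
      case True
      then have "nu n K = m" unfolding m_def using nu_eq_card_if_large assms(1) large(1) by blast
      moreover have "\<bar>(1 - real m * (1 / real n)) / (1 - 1 / real n) ^ m - 1\<bar>
          \<le> 2 * (real m)\<^sup>2 * (1 / real n)\<^sup>2"
        using large(2) prime_gt_1_nat[OF True]
        by (intro abs_ratio_one_minus_power_le) (auto simp: field_simps)
      ultimately show ?thesis
        using True by (simp add: euler_factor_def m_def power_one_over inverse_eq_divide)
    qed (simp add: euler_factor_def)
  qed
  then have "convergent_prod (euler_factor K)"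
    by (intro abs_convergent_prod_imp_convergent_prod summable_imp_abs_convergent_prod)
  then show ?thesis
    unfolding sing_def euler_factor_def[abs_def] by (rule convergent_prod_has_prod)
qed

lemma sing_pos: "finite K \<Longrightarrow> admissible K \<Longrightarrow> 0 < sing K"
  by (rule has_prod_pos[OF euler_factor_has_prod_sing euler_factor_pos])

definition beta_term :: "int set \<Rightarrow> nat \<Rightarrow> real" where
  "beta_term K p = (if prime p then (real (card K) - real (nu p K)) * ln (real p) / real p else 0)"

lemma beta_eq_suminf: "beta K = (\<Sum>p. beta_term K p)"
  unfolding beta_def beta_term_def ..

lemma beta_term_nonneg:
  assumes "finite K"
  shows "0 \<le> beta_term K p"
  using nu_le_card[OF assms, of p] ln_prime_nonneg[of p]
  by (auto simp: beta_term_def intro!: divide_nonneg_nonneg mult_nonneg_nonneg)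

lemma summable_beta_term:
  assumes "finite K"
  shows "summable (beta_term K)"
proof (rule summable_finite)
  fix p assume "p \<notin> {..nat \<lceil>2 * (\<Sum>h\<in>K. \<bar>real_of_int h\<bar>)\<rceil>}"
  then have "2 * (\<Sum>h\<in>K. \<bar>real_of_int h\<bar>) < real p" by (simp add: not_le) linarith
  then show "beta_term K p = 0"
    using nu_eq_card_if_large[OF assms] by (auto simp: beta_term_def)
qed simp

lemma sum_beta_term_le_beta:
  assumes "finite K" "finite F"
  shows "(\<Sum>p\<in>F. beta_term K p) \<le> beta K"
  unfolding beta_eq_suminf using assms by (intro sum_le_suminf summable_beta_term beta_term_nonneg) auto

text \<open>Summable majorant for \<open>\<bar>g p\<bar>\<close> and \<open>\<bar>g p\<bar> * ln p\<close> at the primes where \<open>0\<close> opens a new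
  residue class; if moreover \<open>nu p H = card H\<close>, then \<open>beta\<close> gives no control at \<open>p\<close>.\<close>

definition log_weight :: "nat \<Rightarrow> real" where
  "log_weight n = (if 2 \<le> n then (1 + ln (real n)) / (real n * (real n - 1)) else 0)"

lemma log_weight_nonneg: "0 \<le> log_weight n"
  by (simp add: log_weight_def)

lemma summable_log_weight: "summable log_weight"
proof (rule summable_comparison_test')
  show "summable (\<lambda>n. 6 * real n powr (-3/2))"
    by (intro summable_mult) (simp add: summable_real_powr_iff)
next
  fix n :: nat assume "2 \<le> n"
  then have n: "2 \<le> real n" by simp
  have "ln (sqrt (real n)) \<le> sqrt (real n) - 1"
    using n by (intro ln_le_minus_one) auto
  then have "ln (real n) \<le> 2 * sqrt (real n) - 2"
    using n by (simp add: ln_sqrt)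
  then have "1 + ln (real n) \<le> 3 * sqrt (real n)"
    using real_sqrt_ge_zero[of "real n"] by linarith
  moreover have "real n * real n / 2 \<le> real n * (real n - 1)" using n by simp
  ultimately have "(1 + ln (real n)) / (real n * (real n - 1)) \<le> 3 * sqrt (real n) / (real n * real n / 2)"
    using n by (intro frac_le) auto
  then have "log_weight n \<le> 3 * sqrt (real n) / (real n * real n / 2)"
    using \<open>2 \<le> n\<close> by (simp add: log_weight_def)
  also have "\<dots> = 6 * real n powr (-3/2)"
    using n by (simp add: powr_minus powr_half_sqrt[symmetric] powr_add[symmetric] field_simps power2_eq_square)
  finally show "norm (log_weight n) \<le> 6 * real n powr (-3/2)"
    by (simp add: log_weight_nonneg)
qed

lemma sum_log_weight_le: "finite F \<Longrightarrow> (\<Sum>n\<in>F. log_weight n) \<le> (\<Sum>n. log_weight n)"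
  by (intro sum_le_suminf summable_log_weight log_weight_nonneg) auto

definition approx_const :: "nat \<Rightarrow> real" where
  "approx_const k = (2 * real k + real k * (real k + 1) * (\<Sum>n. log_weight n) / ln 2)
    * exp (4 * real k * (real k + 1) * (\<Sum>n. log_weight n))"

lemma approx_const_nonneg: "0 \<le> approx_const k"
  using suminf_nonneg[OF summable_log_weight log_weight_nonneg] by (simp add: approx_const_def)

section \<open>Local factors at a prime\<close>

locale shifted_admissible =
  fixes H :: "int set"
  assumes finite_H: "finite H" and two_le_card_H: "2 \<le> card H" and zero_notin_H: "0 \<notin> H"
    and admissible_H0: "admissible (insert 0 H)"
begin

abbreviation H0 :: "int set" where "H0 \<equiv> insert 0 H"

lemma card_H0: "card H0 = card H + 1"
  using finite_H zero_notin_H by simp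

lemma nu_bounds:
  assumes "prime p"
  shows "1 \<le> nu p H" "nu p H \<le> card H" "nu p H \<le> nu p H0" "nu p H0 \<le> nu p H + 1" "nu p H0 < p"
proof -
  have "H \<noteq> {}" using two_le_card_H by auto
  then show "1 \<le> nu p H" using finite_H by (simp add: nu_def Suc_le_eq card_gt_0_iff)
  show "nu p H \<le> card H" using finite_H by (rule nu_le_card)
  show "nu p H \<le> nu p H0" "nu p H0 \<le> nu p H + 1"
    using finite_H by (auto simp: nu_def card_insert_if)
  show "nu p H0 < p" using admissible_H0 assms by (simp add: admissible_def)
qed

lemma admissible_H: "admissible H"
  unfolding admissible_def using nu_bounds by (meson le_less_trans)

lemma real_nudag: "prime p \<Longrightarrow> real (nudag H p) = real (nu p H0) - 1"
  using nu_bounds(1,3)[of p] by (simp add: nudag_def of_nat_diff)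

definition g :: "nat \<Rightarrow> real" where
  "g p = (real p - real (nu p H0)) * real p / ((real p - real (nu p H)) * (real p - 1)) - 1"

lemma g_eq:
  assumes "prime p"
  shows "g p = (if nu p H0 = nu p H then 1 / (real p - 1)
                else - real (nu p H) / ((real p - real (nu p H)) * (real p - 1)))"
proof -
  have nz: "real p - real (nu p H) \<noteq> 0" "real p - 1 \<noteq> 0"
    using nu_bounds[OF assms] prime_gt_1_nat[OF assms] by auto
  show ?thesis
  proof (cases "nu p H0 = nu p H")
    case True
    with nz show ?thesis by (simp add: g_def divide_simps)
  next
    case False
    then have "real (nu p H0) = real (nu p H) + 1"
      using nu_bounds[OF assms] by linarith
    with nz False show ?thesis by (simp add: g_def divide_simps) (simp add: algebra_simps)
  qed
qed

lemma euler_factor_H0: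
  assumes "prime p"
  shows "euler_factor H0 p = euler_factor H p * (1 + g p)"
proof -
  have "real p \<noteq> 0" "real p - 1 \<noteq> 0" "real p - real (nu p H) \<noteq> 0"
    using nu_bounds[OF assms] prime_gt_1_nat[OF assms] by auto
  then show ?thesis using assms by (simp add: euler_factor_def g_def card_H0 divide_simps)
qed

lemma one_plus_g_eq_local_factor:
  assumes "prime p" "nudag H p \<noteq> 0"
  shows "- ((real p - 1 - real (nudag H p)) / real (nudag H p)) * - (real p / (real p - real (nu p H)))
      * (real (nudag H p) / (real p - 1)) = 1 + g p"
proof -
  have "real p - real (nu p H) \<noteq> 0" "real p - 1 \<noteq> 0" "real (nu p H0) - 1 \<noteq> 0"
    using nu_bounds[OF assms(1)] prime_gt_1_nat[OF assms(1)] assms real_nudag[OF assms(1)] by auto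
  then show ?thesis using assms by (simp add: g_def real_nudag divide_simps)
qed

lemma g_split:
  assumes "prime p"
  shows "- (real p / (real p - real (nu p H))) * (real (nudag H p) / (real p - 1))
      + real (nu p H) / (real p - real (nu p H)) = g p"
proof -
  have "real p - real (nu p H) \<noteq> 0" "real p - 1 \<noteq> 0"
    using nu_bounds[OF assms] prime_gt_1_nat[OF assms] by auto
  then show ?thesis using assms by (simp add: g_def real_nudag divide_simps) (simp add: algebra_simps)
qed

lemma finite_nudag_eq_0: "finite {p. prime p \<and> nudag H p = 0}"
proof (rule finite_subset)
  show "{p. prime p \<and> nudag H p = 0} \<subseteq> {..nat \<lceil>2 * (\<Sum>h\<in>H0. \<bar>real_of_int h\<bar>)\<rceil>}"
  proof (intro subsetI, rule ccontr)
    fix p assume p: "p \<in> {p. prime p \<and> nudag H p = 0}" "p \<notin> {..nat \<lceil>2 * (\<Sum>h\<in>H0. \<bar>real_of_int h\<bar>)\<rceil>}"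
    then have "2 * (\<Sum>h\<in>H0. \<bar>real_of_int h\<bar>) < real p" by (simp add: not_le) linarith
    then have "nu p H0 = card H + 1" using p(1) finite_H card_H0 nu_eq_card_if_large[of H0 p] by simp
    then show False using p(1) two_le_card_H by (simp add: nudag_def)
  qed
qed simp

lemma prime_dvd_A0_iff:
  assumes "prime p"
  shows "p dvd A0 H \<longleftrightarrow> nudag H p = 0"
proof
  assume "p dvd A0 H"
  then have "p dvd \<Prod>{p. prime p \<and> nudag H p = 0}" by (simp only: A0_def)
  then have "p \<in> {p. prime p \<and> nudag H p = 0}" by (rule prime_in_set_if_dvd_prod[OF assms]) blast
  then show "nudag H p = 0" by blast
next
  assume "nudag H p = 0"
  then show "p dvd A0 H"
    unfolding A0_def using finite_nudag_eq_0 assms by (intro dvd_prod_eqI) simp_all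
qed

lemma sing_H_mult_prod_tendsto:
  "(\<lambda>Q. sing H * (\<Prod>p\<in>primes_le Q. 1 + g p)) \<longlonglongrightarrow> sing H0"
proof -
  have "(\<lambda>p. euler_factor H0 p / euler_factor H p) has_prod (sing H0 / sing H)"
    using finite_H admissible_H admissible_H0
    by (intro has_prod_divide euler_factor_has_prod_sing) auto
  moreover have "euler_factor H0 p / euler_factor H p = (if prime p then 1 + g p else 1)" for p
    using euler_factor_pos[OF admissible_H, of p]
    by (cases "prime p") (simp_all add: euler_factor_H0, simp add: euler_factor_def)
  ultimately have "(\<lambda>Q. \<Prod>p\<le>Q. if prime p then 1 + g p else 1) \<longlonglongrightarrow> sing H0 / sing H"
    by (simp add: has_prod_imp_tendsto)
  moreover have "(\<Prod>p\<le>Q. if prime p then 1 + g p else 1) = (\<Prod>p\<in>primes_le Q. 1 + g p)" for Q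
    unfolding primes_le_def by (subst prod.inter_filter[symmetric]) (auto intro: prod.cong)
  ultimately have "(\<lambda>Q. sing H * (\<Prod>p\<in>primes_le Q. 1 + g p)) \<longlonglongrightarrow> sing H * (sing H0 / sing H)"
    by (intro tendsto_mult_left) simp
  then show ?thesis using sing_pos[OF finite_H admissible_H] by simp
qed

lemma abs_g_le:
  assumes "prime p"
  shows "\<bar>g p\<bar> \<le> 2 * real (card H) / real p"
proof -
  have p: "2 \<le> real p" using prime_ge_2_nat[OF assms] by simp
  have nu: "1 \<le> real (nu p H)" "real (nu p H) \<le> real (card H)" "real (nu p H) + 1 \<le> real p"
    using nu_bounds[OF assms] by auto
  have "\<bar>g p\<bar> \<le> real (nu p H) / (real p - 1)"
  proof (cases "nu p H0 = nu p H")
    case True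
    then show ?thesis using p nu by (simp add: g_eq[OF assms] divide_right_mono)
  next
    case False
    have "real (nu p H) / ((real p - real (nu p H)) * (real p - 1)) \<le> real (nu p H) / (1 * (real p - 1))"
      using p nu by (intro divide_left_mono mult_right_mono) auto
    then show ?thesis using False p nu by (simp add: g_eq[OF assms] abs_div abs_mult)
  qed
  also have "\<dots> \<le> real (card H) / (real p / 2)"
    using p nu by (intro frac_le) auto
  finally show ?thesis by (simp add: mult.commute)
qed

lemma neg_g_le:
  assumes "prime p" "g p < 0"
  shows "- g p \<le> 1 / 2" "- g p \<le> real (card H) * (real (card H) + 1) / (real p * (real p - 1))"
proof -
  have p: "2 \<le> real p" using prime_ge_2_nat[OF assms(1)] by simp
  have "nu p H0 \<noteq> nu p H" using assms p by (auto simp: g_eq)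
  then have nu: "1 \<le> real (nu p H)" "real (nu p H) \<le> real (card H)" "real (nu p H) + 2 \<le> real p"
    using nu_bounds[OF assms(1)] by auto
  have g: "- g p = real (nu p H) / ((real p - real (nu p H)) * (real p - 1))"
    using \<open>nu p H0 \<noteq> nu p H\<close> by (simp add: g_eq[OF assms(1)])
  have "- g p \<le> real (nu p H) / (2 * (real p - 1))"
    unfolding g using p nu by (intro divide_left_mono mult_right_mono) auto
  also have "\<dots> \<le> 1 / 2" using p nu by (simp add: divide_simps)
  finally show "- g p \<le> 1 / 2" .
  have "real p \<le> (real (nu p H) + 1) * (real p - real (nu p H))"
    using nu mult_nonneg_nonneg[of "real (nu p H)" "real p - real (nu p H) - 1"]
    by (simp add: algebra_simps)
  then have "real (nu p H) / (real p - real (nu p H)) \<le> real (nu p H) * (real (nu p H) + 1) / real p"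
    using p nu by (simp add: divide_simps mult_left_mono mult.assoc)
  also have "\<dots> \<le> real (card H) * (real (card H) + 1) / real p"
    using p nu by (intro divide_right_mono mult_mono) auto
  finally have "real (nu p H) / (real p - real (nu p H)) / (real p - 1)
      \<le> real (card H) * (real (card H) + 1) / real p / (real p - 1)"
    using p by (intro divide_right_mono) auto
  then show "- g p \<le> real (card H) * (real (card H) + 1) / (real p * (real p - 1))"
    unfolding g by simp
qed

lemma abs_g_mult_ln_le:
  assumes "prime p"
  shows "\<bar>g p\<bar> * ln (real p)
    \<le> 2 * real (card H) * beta_term H0 p + real (card H) * (real (card H) + 1) * log_weight p"
proof (cases "nu p H0 \<le> card H")
  case True
  have p: "2 \<le> real p" using prime_ge_2_nat[OF assms] by simp
  then have ln_p: "0 \<le> ln (real p)" by simp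
  have "\<bar>g p\<bar> * ln (real p) \<le> 2 * real (card H) / real p * ln (real p)"
    using abs_g_le[OF assms] ln_p by (rule mult_right_mono)
  also have "\<dots> = 2 * real (card H) * (ln (real p) / real p)" by simp
  also have "\<dots> \<le> 2 * real (card H) * beta_term H0 p"
    using True assms p ln_p card_H0 by (intro mult_left_mono) (auto simp: beta_term_def divide_right_mono)
  finally show ?thesis
    using log_weight_nonneg[of p] by (simp add: add_increasing2)
next
  case False
  then have "nu p H0 \<noteq> nu p H" using nu_bounds(2)[OF assms] by linarith
  then have "g p < 0" using assms nu_bounds[OF assms] by (simp add: g_eq divide_pos_pos)
  have p: "2 \<le> p" using prime_ge_2_nat[OF assms] .
  have "\<bar>g p\<bar> * ln (real p) \<le> real (card H) * (real (card H) + 1) / (real p * (real p - 1)) * ln (real p)"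
    using neg_g_le(2)[OF assms \<open>g p < 0\<close>] \<open>g p < 0\<close> p by (intro mult_right_mono) auto
  also have "\<dots> = real (card H) * (real (card H) + 1) * (ln (real p) / (real p * (real p - 1)))"
    by simp
  also have "\<dots> \<le> real (card H) * (real (card H) + 1) * log_weight p"
    using p by (intro mult_left_mono) (auto simp: log_weight_def divide_right_mono)
  finally show ?thesis
    using beta_term_nonneg[of H0 p] finite_H by (simp add: add_increasing)
qed

lemma one_plus_abs_g_le:
  assumes "prime p"
  shows "0 < 1 + g p" "1 + \<bar>g p\<bar> \<le> (1 + 4 * real (card H) * (real (card H) + 1) * log_weight p) * (1 + g p)"
proof -
  define w where "w = real (card H) * (real (card H) + 1) * log_weight p"
  have "0 \<le> w" by (simp add: w_def log_weight_nonneg)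
  have "1 + \<bar>g p\<bar> \<le> (1 + 4 * w) * (1 + g p) \<and> 0 < 1 + g p"
  proof (cases "g p < 0")
    case True
    note neg = neg_g_le[OF assms True]
    have "1 / (real p * (real p - 1)) \<le> log_weight p"
      using prime_ge_2_nat[OF assms] by (simp add: log_weight_def divide_right_mono)
    from mult_left_mono[OF this, of "real (card H) * (real (card H) + 1)"]
    have "- g p \<le> w" using neg(2) unfolding w_def by simp
    have "1 + \<bar>g p\<bar> \<le> (1 - 4 * g p) * (1 + g p)"
      using True neg(1) mult_nonneg_nonneg[of "- g p" "1 + 2 * g p"] by (simp add: algebra_simps)
    also have "\<dots> \<le> (1 + 4 * w) * (1 + g p)"
      using \<open>- g p \<le> w\<close> neg(1) by (intro mult_right_mono) auto
    finally show ?thesis using neg(1) by simp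
  next
    case False
    then have "1 + \<bar>g p\<bar> = 1 * (1 + g p)" by simp
    also have "\<dots> \<le> (1 + 4 * w) * (1 + g p)"
      using False \<open>0 \<le> w\<close> by (intro mult_right_mono) auto
    finally show ?thesis using False by simp
  qed
  then show "0 < 1 + g p" "1 + \<bar>g p\<bar> \<le> (1 + 4 * real (card H) * (real (card H) + 1) * log_weight p) * (1 + g p)"
    unfolding w_def by (simp_all only: mult.assoc)
qed

lemma ln2_le_beta_H0: "ln 2 \<le> beta H0"
proof -
  have "nu 2 H0 \<le> 1" using nu_bounds(5)[of 2] by simp
  then have "ln 2 \<le> beta_term H0 2"
    using two_le_card_H card_H0 by (simp add: beta_term_def)
  also have "\<dots> \<le> beta H0"
    using sum_beta_term_le_beta[of H0 "{2}"] finite_H by simp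
  finally show ?thesis .
qed

lemma sum_abs_g_ln_le:
  assumes "finite A" "\<forall>p\<in>A. prime p"
  shows "(\<Sum>p\<in>A. \<bar>g p\<bar> * ln (real p))
    \<le> (2 * real (card H) + real (card H) * (real (card H) + 1) * (\<Sum>n. log_weight n) / ln 2) * beta H0"
proof -
  define c where "c = real (card H) * (real (card H) + 1)"
  have "c \<ge> 0" by (simp add: c_def)
  have "(\<Sum>p\<in>A. \<bar>g p\<bar> * ln (real p)) \<le> (\<Sum>p\<in>A. 2 * real (card H) * beta_term H0 p + c * log_weight p)"
    using assms(2) abs_g_mult_ln_le unfolding c_def by (intro sum_mono) auto
  also have "\<dots> = 2 * real (card H) * (\<Sum>p\<in>A. beta_term H0 p) + c * (\<Sum>p\<in>A. log_weight p)"
    by (simp add: sum.distrib sum_distrib_left)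
  also have "\<dots> \<le> 2 * real (card H) * beta H0 + c * (\<Sum>n. log_weight n)"
    using finite_H assms(1) \<open>c \<ge> 0\<close>
    by (intro add_mono mult_left_mono sum_beta_term_le_beta sum_log_weight_le) auto
  also have "c * (\<Sum>n. log_weight n) \<le> c * (\<Sum>n. log_weight n) / ln 2 * beta H0"
    using ln2_le_beta_H0 \<open>c \<ge> 0\<close> suminf_nonneg[OF summable_log_weight log_weight_nonneg]
    by (simp add: divide_simps mult_left_mono)
  finally show ?thesis by (simp add: c_def algebra_simps)
qed

lemma prod_one_plus_abs_g_le:
  assumes "finite A" "\<forall>p\<in>A. prime p"
  shows "(\<Prod>p\<in>A. 1 + \<bar>g p\<bar>)
    \<le> exp (4 * real (card H) * (real (card H) + 1) * (\<Sum>n. log_weight n)) * (\<Prod>p\<in>A. 1 + g p)"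
proof -
  define c where "c = 4 * real (card H) * (real (card H) + 1)"
  have "c \<ge> 0" by (simp add: c_def)
  have "(\<Prod>p\<in>A. 1 + \<bar>g p\<bar>) \<le> (\<Prod>p\<in>A. (1 + c * log_weight p) * (1 + g p))"
    using assms(2) one_plus_abs_g_le unfolding c_def by (intro prod_mono) (auto simp: add_nonneg_nonneg)
  also have "\<dots> = (\<Prod>p\<in>A. 1 + c * log_weight p) * (\<Prod>p\<in>A. 1 + g p)"
    by (rule prod.distrib)
  also have "\<dots> \<le> exp (c * (\<Sum>n. log_weight n)) * (\<Prod>p\<in>A. 1 + g p)"
  proof (intro mult_right_mono)
    have "(\<Prod>p\<in>A. 1 + c * log_weight p) \<le> (\<Prod>p\<in>A. exp (c * log_weight p))"
      using \<open>c \<ge> 0\<close> log_weight_nonneg by (intro prod_mono) (auto simp: add_nonneg_nonneg)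
    also have "\<dots> = exp (c * (\<Sum>p\<in>A. log_weight p))"
      using assms(1) by (simp add: exp_sum sum_distrib_left)
    also have "\<dots> \<le> exp (c * (\<Sum>n. log_weight n))"
      using sum_log_weight_le[OF assms(1)] \<open>c \<ge> 0\<close> by (simp add: mult_left_mono)
    finally show "(\<Prod>p\<in>A. 1 + c * log_weight p) \<le> exp (c * (\<Sum>n. log_weight n))" .
    show "0 \<le> (\<Prod>p\<in>A. 1 + g p)"
      using assms(2) one_plus_abs_g_le(1) by (intro prod_nonneg) (auto intro: less_imp_le)
  qed
  finally show ?thesis by (simp add: c_def)
qed

end

section \<open>Expansion of \<open>ydag\<close>\<close>

lemma lam_nonzeroD: "lam H R l n \<noteq> 0 \<Longrightarrow> squarefree n \<and> real n < R"
  by (auto simp: lam_def moebius_def split: if_splits)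

context shifted_admissible
begin

lemma fH_div_f1H_prod_primes:
  assumes "finite E" "\<forall>p\<in>E. prime p"
  shows "fH H (\<Prod>E) / f1H H (\<Prod>E) = (\<Prod>p\<in>E. real p / (real p - real (nu p H)))"
proof -
  have "fH H (\<Prod>E) / f1H H (\<Prod>E)
      = (\<Prod>p\<in>E. (real p / real (nu p H)) / ((real p - real (nu p H)) / real (nu p H)))"
    unfolding fH_def f1H_def prime_factors_prod_primes[OF assms] by (rule prod_dividef[symmetric])
  also have "\<dots> = (\<Prod>p\<in>E. real p / (real p - real (nu p H)))"
  proof (rule prod.cong)
    fix p assume "p \<in> E"
    then have "real (nu p H) \<noteq> 0" using assms(2) nu_bounds(1)[of p] by auto
    then show "(real p / real (nu p H)) / ((real p - real (nu p H)) / real (nu p H))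
        = real p / (real p - real (nu p H))" by simp
  qed simp
  finally show ?thesis .
qed

lemma inverse_f1H_prod_primes:
  assumes "finite T" "\<forall>p\<in>T. prime p"
  shows "inverse (f1H H (\<Prod>T)) = (\<Prod>p\<in>T. real (nu p H) / (real p - real (nu p H)))"
  using assms by (simp add: f1H_def prime_factors_prod_primes prod_inversef[symmetric] o_def)

lemma inverse_fdag_prod_primes:
  assumes "finite E" "\<forall>p\<in>E. prime p"
  shows "inverse (fdag H (\<Prod>E)) = (\<Prod>p\<in>E. real (nudag H p) / (real p - 1))"
  using assms by (simp add: fdag_def prime_factors_prod_primes prod_inversef[symmetric] o_def)

lemma moebius_mult_f1dag:
  assumes "squarefree r"
  shows "real_of_int (moebius r) * f1dag H r
    = (\<Prod>p\<in>prime_factors r. - ((real p - 1 - real (nudag H p)) / real (nudag H p)))"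
  using assms by (simp add: moebius_def f1dag_def prod_uminus)

lemma lam_inner_sum_prod_primes:
  assumes Q: "R \<le> real Q" and E: "E \<subseteq> primes_le Q" and ER: "real (\<Prod>E) < R"
  shows "(\<Sum>r\<in>{r. 0 < r \<and> real r < R / real (\<Prod>E) \<and> coprime r (\<Prod>E)}.
            real_of_int ((moebius r)\<^sup>2) / f1H H r * (ln (R / (real r * real (\<Prod>E)))) ^ l)
       = (\<Sum>T\<in>Pow (primes_le Q - E). (\<Prod>p\<in>T. real (nu p H) / (real p - real (nu p H)))
            * trunc_pow (ln R) l (\<Sum>p\<in>E \<union> T. ln (real p)))"
    (is "(\<Sum>r\<in>?N. _) = _")
proof -
  define d where "d = \<Prod>E"
  define F where "F r = real_of_int ((moebius r)\<^sup>2) / f1H H r * trunc_pow (ln R) l (ln (real r) + ln (real d))"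
    for r
  have "0 < d" unfolding d_def using subset_primes_leD(2)[OF E] by (rule prod_primes_pos)
  then have d: "0 < d" "1 \<le> real d" "ln (real d) = (\<Sum>p\<in>E. ln (real p))"
    unfolding d_def using ln_prod_primes[OF subset_primes_leD[OF E]] by auto
  have "0 < R" using d(2) ER unfolding d_def by linarith
  have "R / real d \<le> R / 1"
    using d ER by (intro divide_left_mono) (auto simp: d_def)
  then have "R / real d \<le> real Q" using Q by simp
  then have N_le_Q: "r \<le> Q" if "r \<in> ?N" for r using that by (simp add: d_def)
  have "(\<Sum>r\<in>?N. real_of_int ((moebius r)\<^sup>2) / f1H H r * (ln (R / (real r * real (\<Prod>E)))) ^ l)
      = (\<Sum>r\<in>?N. F r)"
  proof (rule sum.cong)
    fix r assume "r \<in> ?N"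
    then have "real r * real d < R" "0 < r" using d by (auto simp: d_def pos_less_divide_eq)
    moreover have "0 < real r * real d" using d(1) \<open>0 < r\<close> by simp
    ultimately have "ln (real r * real d) < ln R" "ln (R / (real r * real d)) = ln R - ln (real r * real d)"
      by (auto simp: ln_div)
    moreover have "ln (real r * real d) = ln (real r) + ln (real d)"
      using d(1) \<open>0 < r\<close> by (simp add: ln_mult)
    ultimately have "ln (real r) + ln (real d) < ln R" "ln (R / (real r * real d)) = ln R - (ln (real r) + ln (real d))"
      by simp_all
    then show "real_of_int ((moebius r)\<^sup>2) / f1H H r * (ln (R / (real r * real (\<Prod>E)))) ^ l = F r"
      by (simp add: F_def d_def trunc_pow_def)
  qed simp
  also have "\<dots> = (\<Sum>T\<in>Pow (primes_le Q - E). F (\<Prod>T))"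
  proof (rule sum_squarefree_eq_sum_Pow)
    show "finite (primes_le Q - E)" "\<forall>p\<in>primes_le Q - E. prime p"
      using finite_primes_le by (auto simp: primes_le_def)
    have "?N \<subseteq> {..Q}" using N_le_Q by auto
    then show "finite ?N" by (rule finite_subset) simp
  next
    fix r assume r: "r \<in> ?N" "F r \<noteq> 0"
    then have "squarefree r" by (auto simp: F_def moebius_squared split: if_splits)
    moreover have "prime_factors r \<subseteq> primes_le Q" using r N_le_Q by (intro prime_factors_subset_primes_le) auto
    moreover have "p \<notin> E" if "p \<in> prime_factors r" for p
    proof
      assume "p \<in> E"
      then have "p dvd \<Prod>E" using subset_primes_leD(1)[OF E] by (intro dvd_prodI)
      moreover have "p dvd r" "prime p" using that by auto
      ultimately show False using r(1) not_prime_unit coprime_common_divisor by blast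
    qed
    ultimately show "squarefree r \<and> prime_factors r \<subseteq> primes_le Q - E" by blast
  next
    fix T assume T: "T \<subseteq> primes_le Q - E" "F (\<Prod>T) \<noteq> 0"
    then have "ln (real (\<Prod>T)) + ln (real d) < ln R" by (auto simp: F_def trunc_pow_def split: if_splits)
    moreover have "0 < \<Prod>T" using subset_primes_leD(2)[of T] T(1) by (auto intro: prod_primes_pos)
    ultimately have "ln (real (\<Prod>T) * real d) < ln R"
      using d by (simp add: ln_mult)
    then have "real (\<Prod>T) * real d < R"
      using \<open>0 < \<Prod>T\<close> d \<open>0 < R\<close> by (subst (asm) ln_less_cancel_iff) auto
    moreover have "coprime (\<Prod>T) (\<Prod>E)"
      using T(1) E by (intro coprime_prod_primes) (auto simp: primes_le_def)
    ultimately show "\<Prod>T \<in> ?N" using \<open>0 < \<Prod>T\<close> d by (simp add: d_def pos_less_divide_eq)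
  qed
  also have "\<dots> = (\<Sum>T\<in>Pow (primes_le Q - E). (\<Prod>p\<in>T. real (nu p H) / (real p - real (nu p H)))
            * trunc_pow (ln R) l (\<Sum>p\<in>E \<union> T. ln (real p)))"
  proof (rule sum.cong)
    fix T assume "T \<in> Pow (primes_le Q - E)"
    then have "T \<subseteq> primes_le Q" "T \<inter> E = {}" by auto
    then have T: "finite T" "\<forall>p\<in>T. prime p" "T \<inter> E = {}"
      using subset_primes_leD by auto
    then have "ln (real (\<Prod>T)) + ln (real d) = (\<Sum>p\<in>E \<union> T. ln (real p))"
      using d subset_primes_leD(1)[OF E] by (simp add: ln_prod_primes sum.union_disjoint Int_commute)
    then show "F (\<Prod>T) = (\<Prod>p\<in>T. real (nu p H) / (real p - real (nu p H)))
            * trunc_pow (ln R) l (\<Sum>p\<in>E \<union> T. ln (real p))"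
      using T by (simp add: F_def moebius_squared squarefree_prod_primes divide_inverse
        inverse_f1H_prod_primes)
  qed simp
  finally show ?thesis .
qed

lemma lam_prod_primes:
  assumes "0 < R" "R \<le> real Q" "E \<subseteq> primes_le Q"
  shows "lam H R l (\<Prod>E) = (-1) ^ card E * (\<Prod>p\<in>E. real p / (real p - real (nu p H))) * sing H / fact l
    * (\<Sum>T\<in>Pow (primes_le Q - E). (\<Prod>p\<in>T. real (nu p H) / (real p - real (nu p H)))
        * trunc_pow (ln R) l (\<Sum>p\<in>E \<union> T. ln (real p)))"
proof (cases "real (\<Prod>E) < R")
  case True
  note E = subset_primes_leD[OF assms(3)]
  have "real_of_int (moebius (\<Prod>E)) * fH H (\<Prod>E) / f1H H (\<Prod>E)
      = (-1) ^ card E * (\<Prod>p\<in>E. real p / (real p - real (nu p H)))"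
    by (simp add: moebius_prod_primes[OF E] fH_div_f1H_prod_primes[OF E, symmetric])
  with True show ?thesis
    unfolding lam_def lam_inner_sum_prod_primes[OF assms(2,3) True] by (simp only: if_True)
next
  case False
  have "trunc_pow (ln R) l (\<Sum>p\<in>E \<union> T. ln (real p)) = 0" if "T \<subseteq> primes_le Q - E" for T
  proof -
    note E = subset_primes_leD[OF assms(3)]
    have "T \<subseteq> primes_le Q" using that by blast
    note T = subset_primes_leD[OF this]
    have "ln R \<le> ln (real (\<Prod>E))" using False assms(1) by simp
    also have "\<dots> = (\<Sum>p\<in>E. ln (real p))" using E by (rule ln_prod_primes)
    also have "\<dots> \<le> (\<Sum>p\<in>E \<union> T. ln (real p))"
      using E T by (intro sum_mono2) (auto intro: ln_prime_nonneg)
    finally show ?thesis by (simp add: trunc_pow_def)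
  qed
  then show ?thesis using False by (simp add: lam_def)
qed

text \<open>The restriction to \<open>d\<close> coprime to \<open>A0 H\<close> disappears: if a prime \<open>p\<close> with \<open>nudag H p = 0\<close>
  divides \<open>d\<close>, then \<open>fdag H (d * r)\<close> has the factor \<open>(p - 1) / 0 = 0\<close>, and the summand
  \<open>lam H R l (d * r) / 0\<close> is \<open>0\<close> as well.\<close>

lemma ydag_eq_sum_Pow_lam:
  assumes Q: "R \<le> real Q" and r: "squarefree r" "real r < R" "coprime r (A0 H)"
  shows "ydag H R l r = real_of_int (moebius r) * f1dag H r
    * (\<Sum>D\<in>Pow (primes_le Q - prime_factors r). lam H R l (\<Prod>D * r) / fdag H (\<Prod>D * r))"
proof -
  let ?N = "{d. 0 < d \<and> coprime d (A0 H) \<and> real (d * r) < R}"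
  have "0 < r" using r(1) by (rule squarefree_imp_pos)
  have N_le_Q: "d \<le> Q" if "d \<in> ?N" for d
  proof -
    have "d \<le> d * r" using \<open>0 < r\<close> by simp
    moreover have "real (d * r) < real Q" using that Q by auto
    ultimately show ?thesis by linarith
  qed
  have "(\<Sum>d\<in>?N. lam H R l (d * r) / fdag H (d * r))
      = (\<Sum>D\<in>Pow (primes_le Q - prime_factors r). lam H R l (\<Prod>D * r) / fdag H (\<Prod>D * r))"
  proof (rule sum_squarefree_eq_sum_Pow)
    show "finite (primes_le Q - prime_factors r)" "\<forall>p\<in>primes_le Q - prime_factors r. prime p"
      using finite_primes_le by (auto simp: primes_le_def)
    have "?N \<subseteq> {..Q}" using N_le_Q by auto
    then show "finite ?N" by (rule finite_subset) simp
  next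
    fix d assume d: "d \<in> ?N" "lam H R l (d * r) / fdag H (d * r) \<noteq> 0"
    then have "squarefree (d * r)" using lam_nonzeroD by force
    moreover have "prime_factors d \<subseteq> primes_le Q"
      using N_le_Q[OF d(1)] d(1) by (intro prime_factors_subset_primes_le) auto
    ultimately show "squarefree d \<and> prime_factors d \<subseteq> primes_le Q - prime_factors r"
      using squarefree_multD(1) prime_factors_disjoint_if_squarefree_mult by blast
  next
    fix D assume D: "D \<subseteq> primes_le Q - prime_factors r"
      "lam H R l (\<Prod>D * r) / fdag H (\<Prod>D * r) \<noteq> 0"
    have "D \<subseteq> primes_le Q" using D(1) by blast
    note D_primes = subset_primes_leD[OF this]
    have "D \<inter> {p. prime p \<and> nudag H p = 0} = {}"
    proof (rule ccontr)
      assume "D \<inter> {p. prime p \<and> nudag H p = 0} \<noteq> {}"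
      then obtain p where p: "p \<in> D" "nudag H p = 0" by blast
      have "p dvd \<Prod>D" using p(1) D_primes(1) by (intro dvd_prod_eqI) auto
      moreover have "0 < \<Prod>D" using D_primes(2) by (rule prod_primes_pos)
      ultimately have "p \<in> prime_factors (\<Prod>D * r)"
        using p(1) D_primes(2) \<open>0 < r\<close> by (auto simp: in_prime_factors_iff)
      then have "fdag H (\<Prod>D * r) = 0" using p(2) unfolding fdag_def by (intro prod_zero) auto
      then show False using D(2) by simp
    qed
    then have "coprime (\<Prod>D) (A0 H)"
      unfolding A0_def using D_primes by (intro coprime_prod_primes) auto
    moreover have "real (\<Prod>D * r) < R" using D(2) lam_nonzeroD by force
    ultimately show "\<Prod>D \<in> ?N" using prod_primes_pos[OF D_primes(2)] by simp
  qed
  then show ?thesis using r by (simp add: ydag_def)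
qed

lemma ydag_summand_eq:
  assumes R: "0 < R" "R \<le> real Q" and r: "squarefree r" "real r < R"
    and r_A0: "\<forall>p\<in>prime_factors r. nudag H p \<noteq> 0" and D: "D \<subseteq> primes_le Q - prime_factors r"
  shows "real_of_int (moebius r) * f1dag H r * (lam H R l (\<Prod>D * r) / fdag H (\<Prod>D * r))
    = sing H / fact l * (\<Prod>p\<in>prime_factors r. 1 + g p)
      * (\<Sum>T\<in>Pow (primes_le Q - prime_factors r - D).
          (\<Prod>p\<in>D. - (real p / (real p - real (nu p H))) * (real (nudag H p) / (real p - 1)))
          * (\<Prod>p\<in>T. real (nu p H) / (real p - real (nu p H)))
          * trunc_pow (ln R) l (\<Sum>p\<in>(D \<union> T) \<union> prime_factors r. ln (real p)))"
proof -
  define a where "a p = - (real p / (real p - real (nu p H)))" for p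
  define c where "c p = real (nudag H p) / (real p - 1)" for p
  define X where "X = (\<Sum>T\<in>Pow (primes_le Q - prime_factors r - D).
    (\<Prod>p\<in>T. real (nu p H) / (real p - real (nu p H))) * trunc_pow (ln R) l (\<Sum>p\<in>(D \<union> T) \<union> prime_factors r. ln (real p)))"
  have "0 < r" using r(1) by (rule squarefree_imp_pos)
  have r_le: "prime_factors r \<subseteq> primes_le Q"
    using \<open>0 < r\<close> r(2) R(2) by (intro prime_factors_subset_primes_le) auto
  note D_primes = subset_primes_leD[of D Q]
  have E: "D \<union> prime_factors r \<subseteq> primes_le Q" "D \<inter> prime_factors r = {}" "finite D"
    using D r_le D_primes by auto
  have prod_E: "\<Prod>(D \<union> prime_factors r) = \<Prod>D * r"
    using E prod.union_disjoint[of D "prime_factors r" "\<lambda>x. x"] prod_prime_factors_squarefree[OF r(1)]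
    by simp
  have "primes_le Q - (D \<union> prime_factors r) = primes_le Q - prime_factors r - D" by blast
  then have lam: "lam H R l (\<Prod>D * r) = (\<Prod>p\<in>D \<union> prime_factors r. a p) * sing H / fact l * X"
    using lam_prod_primes[OF R E(1), of l] unfolding prod_E X_def a_def
    by (simp add: prod_uminus Un_ac)
  have fdag: "inverse (fdag H (\<Prod>D * r)) = (\<Prod>p\<in>D \<union> prime_factors r. c p)"
    using inverse_fdag_prod_primes[of "D \<union> prime_factors r"] E D_primes unfolding prod_E c_def by auto
  have "(\<Prod>p\<in>prime_factors r. - ((real p - 1 - real (nudag H p)) / real (nudag H p)))
      * (\<Prod>p\<in>prime_factors r. a p) * (\<Prod>p\<in>prime_factors r. c p) = (\<Prod>p\<in>prime_factors r. 1 + g p)"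
    using r_A0 one_plus_g_eq_local_factor unfolding a_def c_def
    by (simp add: prod.distrib[symmetric] in_prime_factors_iff)
  then have "real_of_int (moebius r) * f1dag H r * (lam H R l (\<Prod>D * r) / fdag H (\<Prod>D * r))
      = sing H / fact l * (\<Prod>p\<in>prime_factors r. 1 + g p) * ((\<Prod>p\<in>D. a p * c p) * X)"
    unfolding divide_inverse lam fdag moebius_mult_f1dag[OF r(1)]
    using E by (simp add: prod.union_disjoint prod.distrib algebra_simps)
  then show ?thesis by (simp add: X_def a_def c_def sum_distrib_left mult.assoc)
qed

lemma ydag_eq_sum_Pow:
  assumes Q: "R \<le> real Q" and r: "squarefree r" "real r < R" "coprime r (A0 H)"
  shows "ydag H R l r = sing H / fact l * (\<Prod>p\<in>prime_factors r. 1 + g p)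
    * (\<Sum>M\<in>Pow (primes_le Q - prime_factors r).
        (\<Prod>p\<in>M. g p) * trunc_pow (ln (R / real r)) l (\<Sum>p\<in>M. ln (real p)))"
proof -
  define A where "A = primes_le Q - prime_factors r"
  define F where "F M = trunc_pow (ln R) l (\<Sum>p\<in>M \<union> prime_factors r. ln (real p))" for M
  have "0 < r" using r(1) by (rule squarefree_imp_pos)
  then have "0 < R" using r(2) by linarith
  have r_A0: "\<forall>p\<in>prime_factors r. nudag H p \<noteq> 0"
  proof (intro ballI notI)
    fix p assume p: "p \<in> prime_factors r" "nudag H p = 0"
    then have "p dvd A0 H" "p dvd r" "prime p" using prime_dvd_A0_iff by auto
    then show False using r(3) coprime_common_divisor not_prime_unit by blast
  qed
  have "finite A" "\<forall>p\<in>A. prime p" using subset_primes_leD[of A Q] by (auto simp: A_def)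
  have ln_r: "ln (real r) = (\<Sum>p\<in>prime_factors r. ln (real p))"
    using ln_prod_primes[of "prime_factors r"] prod_prime_factors_squarefree[OF r(1)] by auto
  have F_eq: "F M = trunc_pow (ln (R / real r)) l (\<Sum>p\<in>M. ln (real p))" if "M \<in> Pow A" for M
  proof -
    have "finite M" "M \<inter> prime_factors r = {}" using that \<open>finite A\<close> finite_subset by (auto simp: A_def)
    then have "(\<Sum>p\<in>M \<union> prime_factors r. ln (real p)) = (\<Sum>p\<in>M. ln (real p)) + ln (real r)"
      using ln_r by (simp add: sum.union_disjoint)
    then show ?thesis
      using \<open>0 < r\<close> \<open>0 < R\<close> by (simp add: F_def trunc_pow_shift ln_div)
  qed
  have "ydag H R l r
      = (\<Sum>D\<in>Pow A. real_of_int (moebius r) * f1dag H r * (lam H R l (\<Prod>D * r) / fdag H (\<Prod>D * r)))"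
    unfolding ydag_eq_sum_Pow_lam[OF Q r] A_def by (rule sum_distrib_left)
  also have "\<dots> = (\<Sum>D\<in>Pow A. sing H / fact l * (\<Prod>p\<in>prime_factors r. 1 + g p)
      * (\<Sum>T\<in>Pow (A - D).
          (\<Prod>p\<in>D. - (real p / (real p - real (nu p H))) * (real (nudag H p) / (real p - 1)))
          * (\<Prod>p\<in>T. real (nu p H) / (real p - real (nu p H))) * F (D \<union> T)))"
    using ydag_summand_eq[OF \<open>0 < R\<close> Q r(1,2) r_A0] by (intro sum.cong) (auto simp: A_def F_def)
  also have "\<dots> = sing H / fact l * (\<Prod>p\<in>prime_factors r. 1 + g p)
      * (\<Sum>D\<in>Pow A. \<Sum>T\<in>Pow (A - D).
          (\<Prod>p\<in>D. - (real p / (real p - real (nu p H))) * (real (nudag H p) / (real p - 1)))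
          * (\<Prod>p\<in>T. real (nu p H) / (real p - real (nu p H))) * F (D \<union> T))"
    by (rule sum_distrib_left[symmetric])
  also have "\<dots> = sing H / fact l * (\<Prod>p\<in>prime_factors r. 1 + g p) * (\<Sum>M\<in>Pow A. (\<Prod>p\<in>M. g p) * F M)"
  proof -
    have "(\<Prod>p\<in>M. - (real p / (real p - real (nu p H))) * (real (nudag H p) / (real p - 1))
        + real (nu p H) / (real p - real (nu p H))) = (\<Prod>p\<in>M. g p)" if "M \<in> Pow A" for M
      using that \<open>\<forall>p\<in>A. prime p\<close> g_split by (intro prod.cong) auto
    then show ?thesis by (simp only: sum_Pow_Pow_Diff_prod[OF \<open>finite A\<close>] cong: sum.cong)
  qed
  also have "\<dots> = sing H / fact l * (\<Prod>p\<in>prime_factors r. 1 + g p)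
    * (\<Sum>M\<in>Pow A. (\<Prod>p\<in>M. g p) * trunc_pow (ln (R / real r)) l (\<Sum>p\<in>M. ln (real p)))"
    by (simp only: F_eq cong: sum.cong)
  finally show ?thesis unfolding A_def .
qed

lemma ydag_approx_primes_le:
  assumes l: "1 \<le> l" and Q: "R \<le> real Q" and r: "squarefree r" "real r < R" "coprime r (A0 H)"
  shows "\<bar>ydag H R l r - sing H * (\<Prod>p\<in>primes_le Q. 1 + g p) * ln (R / real r) ^ l / fact l\<bar>
    \<le> sing H * (\<Prod>p\<in>primes_le Q. 1 + g p) * (real l / fact l) * approx_const (card H) * beta H0
       * ln (R / real r) ^ (l - 1)"
proof -
  define A where "A = primes_le Q - prime_factors r"
  define L where "L = ln (R / real r)"
  define P where "P = (\<Prod>p\<in>prime_factors r. 1 + g p)"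
  define P' where "P' = (\<Prod>p\<in>A. 1 + g p)"
  define Y where "Y = (\<Sum>M\<in>Pow A. (\<Prod>p\<in>M. g p) * trunc_pow L l (\<Sum>p\<in>M. ln (real p)))"
  have "0 < r" using r(1) by (rule squarefree_imp_pos)
  have A: "finite A" "\<forall>p\<in>A. prime p" using subset_primes_leD[of A Q] by (auto simp: A_def)
  have "0 \<le> L" using \<open>0 < r\<close> r(2) by (simp add: L_def)
  have "prime_factors r \<subseteq> primes_le Q"
    using \<open>0 < r\<close> r(2) Q by (intro prime_factors_subset_primes_le) auto
  then have prod_split: "(\<Prod>p\<in>primes_le Q. 1 + g p) = P * P'"
    unfolding P_def P'_def A_def using finite_primes_le
    by (metis (no_types, lifting) finite_Un prod.subset_diff sup.absorb_iff2 mult.commute)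
  have "0 \<le> P" unfolding P_def
    by (intro prod_nonneg) (auto intro: less_imp_le one_plus_abs_g_le(1))
  have "0 \<le> P'" unfolding P'_def using A(2)
    by (intro prod_nonneg) (auto intro: less_imp_le one_plus_abs_g_le(1))
  have "\<bar>Y - P' * L ^ l\<bar>
      \<le> real l * L ^ (l - 1) * (\<Sum>p\<in>A. \<bar>g p\<bar> * ln (real p)) * (\<Prod>p\<in>A. 1 + \<bar>g p\<bar>)"
    unfolding Y_def P'_def using A \<open>0 \<le> L\<close> l
    by (intro sum_Pow_trunc_pow_approx) (auto intro: ln_prime_nonneg)
  also have "\<dots> \<le> real l * L ^ (l - 1) * approx_const (card H) * beta H0 * P'"
  proof -
    have "(\<Sum>p\<in>A. \<bar>g p\<bar> * ln (real p)) * (\<Prod>p\<in>A. 1 + \<bar>g p\<bar>)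
        \<le> ((2 * real (card H) + real (card H) * (real (card H) + 1) * (\<Sum>n. log_weight n) / ln 2) * beta H0)
          * (exp (4 * real (card H) * (real (card H) + 1) * (\<Sum>n. log_weight n)) * P')"
    proof (rule mult_mono)
      have "0 \<le> (\<Sum>p\<in>A. \<bar>g p\<bar> * ln (real p))"
        using A(2) ln_prime_nonneg by (intro sum_nonneg) auto
      then show "0 \<le> (2 * real (card H) + real (card H) * (real (card H) + 1) * (\<Sum>n. log_weight n) / ln 2)
          * beta H0"
        using sum_abs_g_ln_le[OF A] by linarith
    qed (use sum_abs_g_ln_le[OF A] prod_one_plus_abs_g_le[OF A] in \<open>auto simp: P'_def intro: prod_nonneg\<close>)
    then have "real l * L ^ (l - 1) * ((\<Sum>p\<in>A. \<bar>g p\<bar> * ln (real p)) * (\<Prod>p\<in>A. 1 + \<bar>g p\<bar>))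
        \<le> real l * L ^ (l - 1) * (((2 * real (card H) + real (card H) * (real (card H) + 1)
          * (\<Sum>n. log_weight n) / ln 2) * beta H0)
          * (exp (4 * real (card H) * (real (card H) + 1) * (\<Sum>n. log_weight n)) * P'))"
      using \<open>0 \<le> L\<close> by (intro mult_left_mono) auto
    then show ?thesis by (simp only: approx_const_def mult_ac)
  qed
  finally have Y_approx: "\<bar>Y - P' * L ^ l\<bar> \<le> real l * L ^ (l - 1) * approx_const (card H) * beta H0 * P'" .
  have "ydag H R l r = sing H / fact l * P * Y"
    unfolding ydag_eq_sum_Pow[OF Q r] P_def Y_def A_def L_def ..
  then have "ydag H R l r - sing H * (P * P') * L ^ l / fact l = sing H / fact l * P * (Y - P' * L ^ l)"
    by (simp add: field_simps)
  moreover have "0 \<le> sing H / fact l * P"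
    using sing_pos[OF finite_H admissible_H] \<open>0 \<le> P\<close> by simp
  ultimately have "\<bar>ydag H R l r - sing H * (P * P') * L ^ l / fact l\<bar> = sing H / fact l * P * \<bar>Y - P' * L ^ l\<bar>"
    by (metis abs_mult abs_of_nonneg)
  also have "\<dots> \<le> sing H / fact l * P * (real l * L ^ (l - 1) * approx_const (card H) * beta H0 * P')"
    using sing_pos[OF finite_H admissible_H] \<open>0 \<le> P\<close> Y_approx by (intro mult_left_mono) auto
  finally show ?thesis unfolding prod_split L_def by (simp add: algebra_simps)
qed

lemma ydag_approx:
  assumes l: "1 \<le> l" and r: "squarefree r" "real r < R" "coprime r (A0 H)"
  shows "\<bar>ydag H R l r - sing H0 * ln (R / real r) ^ l / fact l\<bar>
    \<le> sing H0 * (real l / fact l) * approx_const (card H) * beta H0 * ln (R / real r) ^ (l - 1)"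
proof -
  define L where "L = ln (R / real r)"
  define c where "c Q = sing H * (\<Prod>p\<in>primes_le Q. 1 + g p)" for Q
  define err where "err Q = \<bar>ydag H R l r - c Q * L ^ l / fact l\<bar>
    - c Q * (real l / fact l) * approx_const (card H) * beta H0 * L ^ (l - 1)" for Q
  have "err \<longlonglongrightarrow> \<bar>ydag H R l r - sing H0 * L ^ l / fact l\<bar>
      - sing H0 * (real l / fact l) * approx_const (card H) * beta H0 * L ^ (l - 1)"
    unfolding err_def c_def by (intro tendsto_intros sing_H_mult_prod_tendsto) simp
  moreover have "\<exists>N. \<forall>Q\<ge>N. err Q \<le> 0"
  proof (intro exI allI impI)
    fix Q assume "nat \<lceil>R\<rceil> \<le> Q"
    then have "R \<le> real Q" by linarith
    then show "err Q \<le> 0"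
      using ydag_approx_primes_le[OF l _ r, of Q] unfolding err_def c_def L_def by linarith
  qed
  ultimately have "\<bar>ydag H R l r - sing H0 * L ^ l / fact l\<bar>
      - sing H0 * (real l / fact l) * approx_const (card H) * beta H0 * L ^ (l - 1) \<le> 0"
    by (rule LIMSEQ_le_const2)
  then show ?thesis unfolding L_def by simp
qed

lemma ydag_approx_moebius:
  assumes "1 \<le> l" "real r < R" "coprime r (A0 H)"
  shows "\<bar>ydag H R l r - real_of_int ((moebius r)\<^sup>2) * sing H0 / fact l * ln (R / real r) ^ l\<bar>
    \<le> approx_const (card H) * real_of_int ((moebius r)\<^sup>2) * beta H0 * sing H0 * ln (2 * R / real r) ^ (l - 1)"
proof (cases "squarefree r")
  case False
  then show ?thesis by (simp add: ydag_def moebius_def)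
next
  case True
  have L: "0 \<le> ln (R / real r)" "ln (R / real r) \<le> ln (2 * R / real r)"
    using assms(2) squarefree_imp_pos[OF True] by (auto simp: divide_right_mono)
  have "real l \<le> fact l" by (metis fact_ge_self of_nat_fact of_nat_le_iff)
  then have "real l / fact l \<le> 1" by simp
  moreover have "0 \<le> beta H0" using ln2_le_beta_H0 ln_ge_zero[of "2::real"] by linarith
  then have "0 \<le> sing H0 * approx_const (card H) * beta H0"
    using sing_pos[OF _ admissible_H0] finite_H approx_const_nonneg by (auto intro!: mult_nonneg_nonneg)
  ultimately have "real l / fact l * (sing H0 * approx_const (card H) * beta H0) * ln (R / real r) ^ (l - 1)
      \<le> 1 * (sing H0 * approx_const (card H) * beta H0) * ln (2 * R / real r) ^ (l - 1)"
    using L by (intro mult_mono mult_right_mono power_mono) auto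
  then have "sing H0 * (real l / fact l) * approx_const (card H) * beta H0 * ln (R / real r) ^ (l - 1)
      \<le> approx_const (card H) * beta H0 * sing H0 * ln (2 * R / real r) ^ (l - 1)"
    by (simp only: mult_ac mult_1)
  with ydag_approx[OF assms(1) True assms(2,3)] True show ?thesis
    by (simp add: moebius_squared mult_ac)
qed

end

theorem lemma12:
  fixes k :: nat
  assumes "k \<ge> 2"
  shows "\<exists>C::real. \<forall>(H::int set) (l::nat) (R::real) (r::nat).
    finite H \<and> card H = k \<and> 0 \<notin> H \<and> admissible (insert 0 H) \<and>
    1 \<le> l \<and> l \<le> k \<and> 1 < R \<and> 0 < r \<and> real r < R \<and> coprime r (A0 H) \<longrightarrow>
    \<bar>ydag H R l r
      - real_of_int ((moebius r)\<^sup>2) * sing (insert 0 H) / fact l * (ln (R / real r)) ^ l\<bar>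
    \<le> C * real_of_int ((moebius r)\<^sup>2) * beta (insert 0 H) * sing (insert 0 H)
        * (ln (2 * R / real r)) ^ (l - 1)"
proof (intro exI allI impI, elim conjE)
  fix H :: "int set" and l :: nat and R :: real and r :: nat
  assume H: "finite H" "card H = k" "0 \<notin> H" "admissible (insert 0 H)"
    and hyps: "1 \<le> l" "l \<le> k" "1 < R" "0 < r" "real r < R" "coprime r (A0 H)"
  interpret shifted_admissible H
    using H assms by unfold_locales auto
  show "\<bar>ydag H R l r
      - real_of_int ((moebius r)\<^sup>2) * sing (insert 0 H) / fact l * (ln (R / real r)) ^ l\<bar>
    \<le> approx_const k * real_of_int ((moebius r)\<^sup>2) * beta (insert 0 H) * sing (insert 0 H)
        * (ln (2 * R / real r)) ^ (l - 1)"
    using ydag_approx_moebius hyps H(2) by simp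
qed

end
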